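(* Let $\varphi=\mathrm{Parity}(\{0,1\})$ be the co-Büchi objective. There exists an infinitely branching (countable) MDP $\mathcal M$ with a color function $\mathit{Col}:S\to\{0,1\}$ and an initial state $s$ such that (i) for every FR-strategy $\sigma$ we have $\mathcal P_{\mathcal M,s,\sigma}(\varphi)=0$, and (ii) there exists an HD-strategy $\sigma$ such that $\mathcal P_{\mathcal M,s,\sigma}(\varphi)=1$. Hence optimal (and even almost-surely winning) strategies and $\epsilon$-optimal strategies for co-Büchi require infinite memory (i.e., cannot in general be chosen FR).
   Context: An MDP is $\mathcal M=\langle S,S_\Box,S_\circ,\longrightarrow,P\rangle$ where $S$ is a countable set of states partitioned into player states $S_\Box$ and random states $S_\circ$, $\longrightarrow\subseteq S\times S$ is a transition relation in which every state has at least one successor, and $P$ assigns to each random state a probability distribution over its successors. $\mathcal M$ is finitely branching if every state has finitely many successors, otherwise infinitely branching. A play is an infinite sequence $s_0s_1\cdots$ with $s_i\longrightarrow s_{i+1}$ for all $i$. A strategy is a function $\sigma:S^*S_\Box\to\mathcal D(S)$ assigning to each partial play ending in a player state $s$ a probability distribution over successors of $s$. Strategies are implemented by probabilistic transducers $(\mathsf M,\mathsf m_0,\pi_u,\pi_s)$ with countable memory $\mathsf M$, initial mode $\mathsf m_0$, randomized memory update $\pi_u:\mathsf M\times S\to\mathcal D(\mathsf M)$ and randomized successor choice $\pi_s:\mathsf M\times S_\Box\to\mathcal D(S)$ (choosing only successors of the current state); the induced strategy is $\sigma(s_0\cdots s_n)=\pi_s(s_n,\pi_u(s_0\cdots s_{n-1},\mathsf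 m_0))$ with $\pi_u$ extended naturally. A strategy is finite-memory (F) if some transducer with finite $\mathsf M$ induces it, deterministic (D) if $\pi_u,\pi_s$ can be taken Dirac; FR = finite-memory randomized, HD = history-dependent deterministic. $\mathcal P_{\mathcal M,s,\sigma}$ is the induced probability measure on plays from $s$. For a color function $\mathit{Col}:S\to\mathcal C$ with $\mathcal C\subseteq\mathbb N$ finite, $\mathrm{Parity}(\mathcal C)$ is the set of plays in which the largest color occurring infinitely often is even; thus $\mathrm{Parity}(\{0,1\})$ (co-Büchi) is the set of plays visiting color-1 states only finitely often. The value of $s$ is $\sup_\sigma\mathcal P_{\mathcal M,s,\sigma}(\varphi)$; $\sigma$ is $\epsilon$-optimal if it achieves at least value minus $\epsilon$, optimal if $\epsilon=0$, almost-surely winning if it achieves probability $1$. *)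

theory Defs
  imports "HOL-Probability.Probability"
begin

text \<open>An MDP is given by the set of
player states (all other states are random states), the successor function (the transition
relation), and the probability distributions of random states.\<close>

record mdp =
  player :: "nat set"
  succ   :: "nat \<Rightarrow> nat set"
  prob_of :: "nat \<Rightarrow> nat pmf"

definition wf_mdp :: "mdp \<Rightarrow> bool" where
  "wf_mdp M \<longleftrightarrow> (\<forall>t. succ M t \<noteq> {}) \<and>
     (\<forall>t. t \<notin> player M \<longrightarrow> set_pmf (prob_of M t) \<subseteq> succ M t)"

definition infinitely_branching :: "mdp \<Rightarrow> bool" where
  "infinitely_branching M \<longleftrightarrow> (\<exists>t. infinite (succ M t))"

definition is_play :: "mdp \<Rightarrow> nat stream \<Rightarrow> bool" where
  "is_play M \<omega> \<longleftrightarrow> (\<forall>i. \<omega> !! Suc i \<in> succ M (\<omega> !! i))"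

text \<open>Strategies: a history (nonempty list s0...sn with sn a player state) is mapped to a
distribution over successors of sn.  Values on other lists are irrelevant.\<close>

definition is_strategy :: "mdp \<Rightarrow> (nat list \<Rightarrow> nat pmf) \<Rightarrow> bool" where
  "is_strategy M \<sigma> \<longleftrightarrow>
     (\<forall>h. h \<noteq> [] \<and> last h \<in> player M \<longrightarrow> set_pmf (\<sigma> h) \<subseteq> succ M (last h))"

text \<open>Probabilistic transducers with memory modes encoded in a countable set Mem of naturals.\<close>

definition wf_transducer :: "mdp \<Rightarrow> nat set \<Rightarrow> nat \<Rightarrow> (nat \<Rightarrow> nat \<Rightarrow> nat pmf)
    \<Rightarrow> (nat \<Rightarrow> nat \<Rightarrow> nat pmf) \<Rightarrow> bool" where
  "wf_transducer M Mem m0 upd sel \<longleftrightarrow> m0 \<in> Mem \<and>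
     (\<forall>m\<in>Mem. \<forall>t. set_pmf (upd m t) \<subseteq> Mem) \<and>
     (\<forall>m\<in>Mem. \<forall>t\<in>player M. set_pmf (sel m t) \<subseteq> succ M t)"

definition upd_ext :: "(nat \<Rightarrow> nat \<Rightarrow> nat pmf) \<Rightarrow> nat list \<Rightarrow> nat \<Rightarrow> nat pmf" where
  "upd_ext upd w m0 = foldl (\<lambda>d t. bind_pmf d (\<lambda>m. upd m t)) (return_pmf m0) w"

definition induces :: "mdp \<Rightarrow> nat \<Rightarrow> (nat \<Rightarrow> nat \<Rightarrow> nat pmf) \<Rightarrow> (nat \<Rightarrow> nat \<Rightarrow> nat pmf)
    \<Rightarrow> (nat list \<Rightarrow> nat pmf) \<Rightarrow> bool" where
  "induces M m0 upd sel \<sigma> \<longleftrightarrow>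
     (\<forall>h. h \<noteq> [] \<and> last h \<in> player M \<longrightarrow>
        \<sigma> h = bind_pmf (upd_ext upd (butlast h) m0) (\<lambda>m. sel m (last h)))"

definition FR_strategy :: "mdp \<Rightarrow> (nat list \<Rightarrow> nat pmf) \<Rightarrow> bool" where
  "FR_strategy M \<sigma> \<longleftrightarrow> is_strategy M \<sigma> \<and>
     (\<exists>Mem m0 upd sel. finite Mem \<and> wf_transducer M Mem m0 upd sel \<and> induces M m0 upd sel \<sigma>)"

definition HD_strategy :: "mdp \<Rightarrow> (nat list \<Rightarrow> nat pmf) \<Rightarrow> bool" where
  "HD_strategy M \<sigma> \<longleftrightarrow> is_strategy M \<sigma> \<and>
     (\<exists>Mem m0 upd sel. wf_transducer M Mem m0 upd sel \<and>
        (\<forall>m\<in>Mem. \<forall>t. \<exists>m'. upd m t = return_pmf m') \<and>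
        (\<forall>m\<in>Mem. \<forall>t\<in>player M. \<exists>t'. sel m t = return_pmf t') \<and>
        induces M m0 upd sel \<sigma>)"

definition step_prob :: "mdp \<Rightarrow> (nat list \<Rightarrow> nat pmf) \<Rightarrow> nat list \<Rightarrow> nat \<Rightarrow> real" where
  "step_prob M \<sigma> h u =
     (if last h \<in> player M then pmf (\<sigma> h) u else pmf (prob_of M (last h)) u)"

definition cyl_prob :: "mdp \<Rightarrow> nat \<Rightarrow> (nat list \<Rightarrow> nat pmf) \<Rightarrow> nat list \<Rightarrow> real" where
  "cyl_prob M s \<sigma> h =
     (if h = [] then 1
      else (if hd h = s then 1 else 0) *
           (\<Prod>i\<in>{0..<length h - 1}. step_prob M \<sigma> (take (Suc i) h) (h ! Suc i)))"

text \<open>\<mu> is the probability measure P_{M,s,\<sigma>} on infinite state sequences: a probability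
measure on the stream sigma-algebra agreeing with the strategy on all cylinders
(which determines it uniquely).\<close>

definition is_play_measure :: "mdp \<Rightarrow> nat \<Rightarrow> (nat list \<Rightarrow> nat pmf) \<Rightarrow> nat stream measure \<Rightarrow> bool" where
  "is_play_measure M s \<sigma> \<mu> \<longleftrightarrow>
     prob_space \<mu> \<and> sets \<mu> = sets (stream_space (count_space UNIV)) \<and>
     (\<forall>h. measure \<mu> {\<omega>. stake (length h) \<omega> = h} = cyl_prob M s \<sigma> h)"

text \<open>Parity objective for a color function with finite range: the largest color occurring
infinitely often is even.\<close>

definition Parity :: "mdp \<Rightarrow> (nat \<Rightarrow> nat) \<Rightarrow> nat stream set" where
  "Parity M Col = {\<omega>. is_play M \<omega> \<and>
     even (Max {c. \<exists>\<^sub>\<infinity>i. Col (\<omega> !! i) = c})}"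

end

theory Submission
  imports Defs
begin

text \<open>A finite-memory strategy randomises over finitely many memory modes, so there is a uniform
  \<open>q > 0\<close> such that from every visit of the player state the next visit of colour 1 has
  probability at least \<open>q\<close>; hence colour 1 is visited infinitely often almost surely.  The
  deterministic strategy that raises its choice by one in every round visits colour 1 in round
  \<open>k\<close> with probability \<open>2^-k\<close>, so by Borel-Cantelli only finitely often.  Its play measure is
  constructed as the image of a stream of independent geometric samples.\<close>

section \<open>Cylinders and play measures\<close>

lemma cyl_prob_Nil [simp]: "cyl_prob M s \<sigma> [] = 1"
  by (simp add: cyl_prob_def)

lemma cyl_prob_singleton: "cyl_prob M s \<sigma> [t] = (if t = s then 1 else 0)"
  by (simp add: cyl_prob_def)

lemma cyl_prob_snoc:
  assumes "h \<noteq> []"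
  shows "cyl_prob M s \<sigma> (h @ [a]) = cyl_prob M s \<sigma> h * step_prob M \<sigma> h a"
proof -
  obtain k where k: "length h = Suc k" using assms by (cases h) auto
  have "(\<Prod>i\<in>{0..<k}. step_prob M \<sigma> (take (Suc i) (h @ [a])) ((h @ [a]) ! Suc i))
      = (\<Prod>i\<in>{0..<k}. step_prob M \<sigma> (take (Suc i) h) (h ! Suc i))"
    using k by (intro prod.cong) (auto simp: nth_append)
  then show ?thesis
    using assms k by (simp add: cyl_prob_def prod.atLeast0_lessThan_Suc nth_append)
qed

lemma step_prob_nonzero_succ:
  assumes "wf_mdp M" "is_strategy M \<sigma>" "h \<noteq> []" "step_prob M \<sigma> h a \<noteq> 0"
  shows "a \<in> succ M (last h)"
proof (cases "last h \<in> player M")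
  case True
  then have "a \<in> set_pmf (\<sigma> h)"
    using assms(4) by (simp add: step_prob_def set_pmf_iff)
  with True assms(2,3) show ?thesis
    unfolding is_strategy_def by blast
next
  case False
  then have "a \<in> set_pmf (prob_of M (last h))"
    using assms(4) by (simp add: step_prob_def set_pmf_iff)
  with False assms(1) show ?thesis
    unfolding wf_mdp_def by blast
qed

lemma cyl_prob_nonzero_path:
  assumes "wf_mdp M" "is_strategy M \<sigma>" "cyl_prob M s \<sigma> h \<noteq> 0" "h \<noteq> []"
  shows "hd h = s \<and> (\<forall>i. Suc i < length h \<longrightarrow> h ! Suc i \<in> succ M (h ! i))"
  using assms(3,4)
proof (induction h rule: rev_induct)
  case (snoc a h)
  show ?case
  proof (cases "h = []")
    case True
    then show ?thesis using snoc.prems by (simp add: cyl_prob_singleton split: if_splits)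
  next
    case False
    with snoc.prems have "cyl_prob M s \<sigma> h \<noteq> 0" "step_prob M \<sigma> h a \<noteq> 0"
      by (simp_all add: cyl_prob_snoc)
    with snoc.IH False step_prob_nonzero_succ[OF assms(1,2)]
    have "hd h = s" and "\<forall>i. Suc i < length h \<longrightarrow> h ! Suc i \<in> succ M (h ! i)"
      and "a \<in> succ M (last h)"
      by auto
    moreover from this(3) have "\<forall>i. Suc i = length h \<longrightarrow> a \<in> succ M (h ! i)"
      using False by (metis diff_Suc_1 last_conv_nth)
    ultimately show ?thesis using False
      by (auto simp: nth_append less_Suc_eq)
  qed
qed simp

lemma Parity_co_Buchi:
  assumes "\<forall>t. Col t \<in> {0, 1}"
  shows "Parity M Col = {\<omega>. is_play M \<omega> \<and> (\<forall>\<^sub>\<infinity>i. Col (\<omega> !! i) = 0)}"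
proof -
  have "even (Max {c. \<exists>\<^sub>\<infinity>i. Col (\<omega> !! i) = c}) \<longleftrightarrow> (\<forall>\<^sub>\<infinity>i. Col (\<omega> !! i) = 0)"
    for \<omega> :: "nat stream"
  proof -
    let ?C = "{c. \<exists>\<^sub>\<infinity>i. Col (\<omega> !! i) = c}"
    have C01: "?C \<subseteq> {0, 1}"
    proof
      fix c assume "c \<in> ?C"
      then obtain i where "Col (\<omega> !! i) = c"
        using INFM_EX by blast
      with assms show "c \<in> {0, 1}"
        by auto
    qed
    have col0: "Col (\<omega> !! i) = 0 \<longleftrightarrow> Col (\<omega> !! i) \<noteq> 1" for i
      using assms[rule_format, of "\<omega> !! i"] by auto
    show ?thesis
    proof (cases "1 \<in> ?C")
      case True
      then have "Max ?C = 1"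
        using C01 by (intro Max_eqI) (auto intro: finite_subset)
      with True show ?thesis
        by (auto simp: col0 not_MOST)
    next
      case False
      then have ev0: "\<forall>\<^sub>\<infinity>i. Col (\<omega> !! i) = 0"
        by (simp add: col0 not_INFM)
      then have "0 \<in> ?C"
        by (simp add: MOST_INFM)
      with False C01 have "?C = {0}"
        by blast
      with ev0 show ?thesis
        by simp
    qed
  qed
  then show ?thesis
    unfolding Parity_def by auto
qed

lemma stake_sets:
  fixes \<mu> :: "'a::countable stream measure"
  assumes "sets \<mu> = sets (stream_space (count_space UNIV))"
  shows "{\<omega>. stake n \<omega> \<in> T} \<in> sets \<mu>"
proof -
  have "stake n -` T \<inter> space (stream_space (count_space UNIV)) \<in> sets (stream_space (count_space UNIV))"
    by (rule measurable_sets[OF measurable_stake]) simp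
  then show ?thesis
    by (simp add: assms space_stream_space vimage_def)
qed

lemma snth_sets:
  fixes \<mu> :: "'a::countable stream measure"
  assumes "sets \<mu> = sets (stream_space (count_space UNIV))"
  shows "{\<omega>. \<omega> !! i \<in> A} \<in> sets \<mu>"
proof -
  have "(\<lambda>\<omega>. \<omega> !! i) -` A \<inter> space (stream_space (count_space UNIV))
      \<in> sets (stream_space (count_space UNIV))"
    by (rule measurable_sets[OF measurable_snth]) simp
  then show ?thesis
    by (simp add: assms space_stream_space vimage_def)
qed

lemma measure_stake_Int_le:
  fixes \<mu> :: "'a::countable stream measure"
  assumes "finite_measure \<mu>" "sets \<mu> = sets (stream_space (count_space UNIV))" "E \<in> sets \<mu>"
    and bound: "\<And>h. length h = L \<Longrightarrow>
      measure \<mu> ({\<omega>. stake L \<omega> = h} \<inter> E) \<le> c * measure \<mu> {\<omega>. stake L \<omega> = h}"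
    and "0 \<le> c"
  shows "measure \<mu> ({\<omega>. stake L \<omega> \<in> T} \<inter> E) \<le> c * measure \<mu> {\<omega>. stake L \<omega> \<in> T}"
proof -
  interpret finite_measure \<mu> by fact
  define I where "I = {h \<in> T. length h = L}"
  define Y where "Y h = {\<omega>. stake L \<omega> = h}" for h :: "'a list"
  have Y_sets: "Y h \<in> sets \<mu>" for h
    unfolding Y_def using stake_sets[OF assms(2), of L "{h}"] by simp
  have disj: "disjoint_family_on (\<lambda>h. Y h \<inter> E) I" "disjoint_family_on Y I"
    by (auto simp: disjoint_family_on_def Y_def)
  have "{\<omega>. stake L \<omega> \<in> T} = (\<Union>h\<in>I. Y h)"
    by (auto simp: I_def Y_def)
  moreover have "emeasure \<mu> (\<Union>h\<in>I. Y h \<inter> E) \<le> ennreal c * emeasure \<mu> (\<Union>h\<in>I. Y h)"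
  proof -
    have "emeasure \<mu> (\<Union>h\<in>I. Y h \<inter> E) = (\<integral>\<^sup>+h. emeasure \<mu> (Y h \<inter> E) \<partial>count_space I)"
      using Y_sets assms(3) disj by (intro emeasure_UN_countable) auto
    also have "\<dots> \<le> (\<integral>\<^sup>+h. ennreal c * emeasure \<mu> (Y h) \<partial>count_space I)"
      using bound \<open>0 \<le> c\<close>
      by (intro nn_integral_mono) (auto simp: I_def Y_def emeasure_eq_measure ennreal_mult[symmetric])
    also have "\<dots> = ennreal c * emeasure \<mu> (\<Union>h\<in>I. Y h)"
      using Y_sets disj by (simp add: nn_integral_cmult emeasure_UN_countable)
    finally show ?thesis .
  qed
  ultimately show ?thesis
    using \<open>0 \<le> c\<close> by (simp add: emeasure_eq_measure ennreal_mult[symmetric] flip: UN_extend_simps(4))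
qed

lemma stake_Suc_Suc_eq_append:
  "length h = L \<Longrightarrow>
    stake (Suc (Suc L)) \<omega> = h @ [a, b] \<longleftrightarrow> stake L \<omega> = h \<and> \<omega> !! L = a \<and> \<omega> !! Suc L = b"
  by (auto simp: stake_Suc simp del: stake.simps)

lemma play_measure_two_steps_ge:
  assumes pm: "is_play_measure M s \<sigma> \<mu>" and "finite N" "N \<inter> player M = {}"
    and "h \<noteq> []" "last h \<in> player M"
  shows "cyl_prob M s \<sigma> h * (\<Sum>u\<in>N. pmf (\<sigma> h) u * pmf (prob_of M u) c)
    \<le> measure \<mu> {\<omega>. stake (length h) \<omega> = h \<and> \<omega> !! Suc (length h) = c}"
proof -
  interpret prob_space \<mu>
    using pm by (simp add: is_play_measure_def)
  have sets: "sets \<mu> = sets (stream_space (count_space UNIV))"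
    using pm by (simp add: is_play_measure_def)
  define X where "X u = {\<omega>. stake (Suc (Suc (length h))) \<omega> = h @ [u, c]}" for u
  have X_sets: "X u \<in> sets \<mu>" for u
    unfolding X_def using stake_sets[OF sets, of _ "{h @ [u, c]}"] by (simp del: stake.simps)
  have X_measure: "measure \<mu> (X u) = cyl_prob M s \<sigma> h * (pmf (\<sigma> h) u * pmf (prob_of M u) c)"
    if "u \<in> N" for u
  proof -
    have "measure \<mu> (X u) = cyl_prob M s \<sigma> ((h @ [u]) @ [c])"
      using pm unfolding is_play_measure_def X_def
      by (metis append_Cons append_Nil append_assoc length_append_singleton)
    also have "\<dots> = cyl_prob M s \<sigma> h * step_prob M \<sigma> h u * step_prob M \<sigma> (h @ [u]) c"
      using cyl_prob_snoc[of "h @ [u]" M s \<sigma> c] cyl_prob_snoc[OF \<open>h \<noteq> []\<close>, of M s \<sigma> u] by simp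
    finally show ?thesis
      using that assms(3,5) by (auto simp: step_prob_def)
  qed
  have "disjoint_family_on X N"
    by (auto simp: disjoint_family_on_def X_def stake_Suc_Suc_eq_append simp del: stake.simps)
  then have "measure \<mu> (\<Union>u\<in>N. X u) = (\<Sum>u\<in>N. measure \<mu> (X u))"
    using X_sets \<open>finite N\<close> by (intro measure_finite_Union) auto
  then have "cyl_prob M s \<sigma> h * (\<Sum>u\<in>N. pmf (\<sigma> h) u * pmf (prob_of M u) c) = measure \<mu> (\<Union>u\<in>N. X u)"
    by (simp add: X_measure sum_distrib_left)
  also have "\<dots> \<le> measure \<mu> {\<omega>. stake (length h) \<omega> = h \<and> \<omega> !! Suc (length h) = c}"
    using snth_sets[OF sets, of "Suc (length h)" "{c}"] stake_sets[OF sets, of "length h" "{h}"]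
    by (intro finite_measure_mono) (auto simp: X_def stake_Suc_Suc_eq_append Collect_conj_eq simp del: stake.simps)
  finally show ?thesis .
qed

section \<open>Finite-memory strategies\<close>

lemma set_pmf_upd_ext:
  assumes "\<forall>m\<in>Mem. \<forall>t. set_pmf (upd m t) \<subseteq> Mem" "m0 \<in> Mem"
  shows "set_pmf (upd_ext upd w m0) \<subseteq> Mem"
proof -
  have "set_pmf d \<subseteq> Mem \<Longrightarrow> set_pmf (foldl (\<lambda>d t. bind_pmf d (\<lambda>m. upd m t)) d w) \<subseteq> Mem" for d
  proof (induction w arbitrary: d)
    case (Cons t w)
    have "set_pmf (bind_pmf d (\<lambda>m. upd m t)) \<subseteq> Mem"
      using Cons.prems assms(1) by (auto simp: set_bind_pmf)
    then show ?case
      using Cons.IH by simp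
  qed simp
  then show ?thesis
    using assms(2) by (simp add: upd_ext_def)
qed

text \<open>Every mode puts positive mass on some successor of positive weight; the least such mass
  over the finitely many modes bounds the choice after every history.\<close>

lemma finite_memory_weight_lower_bound:
  assumes "finite Mem" and trans: "wf_transducer M Mem m0 upd sel" and "induces M m0 upd sel \<sigma>"
    and "t \<in> player M" and w_pos: "\<forall>u\<in>succ M t. 0 < w u"
  obtains q N where "0 < q" "q \<le> 1" "finite N" "N \<subseteq> succ M t"
    "\<And>h. h \<noteq> [] \<Longrightarrow> last h = t \<Longrightarrow> q \<le> (\<Sum>u\<in>N. pmf (\<sigma> h) u * w u)"
proof -
  have "m0 \<in> Mem" and upd: "\<forall>m\<in>Mem. \<forall>t. set_pmf (upd m t) \<subseteq> Mem"
    and sel: "\<And>m. m \<in> Mem \<Longrightarrow> set_pmf (sel m t) \<subseteq> succ M t"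
    using trans \<open>t \<in> player M\<close> by (auto simp: wf_transducer_def)
  define choice where "choice m = (SOME u. u \<in> set_pmf (sel m t))" for m
  have choice: "choice m \<in> set_pmf (sel m t)" for m
    unfolding choice_def using set_pmf_not_empty by (rule some_in_eq[THEN iffD2])
  define v where "v m = pmf (sel m t) (choice m) * w (choice m)" for m
  define q where "q = min 1 (Min (v ` Mem))"
  define N where "N = choice ` Mem"
  have v_pos: "0 < v m" if "m \<in> Mem" for m
    using choice[of m] sel[OF that] w_pos by (auto simp: v_def pmf_positive)
  have N: "finite N" "N \<subseteq> succ M t"
    using \<open>finite Mem\<close> choice sel by (auto simp: N_def)
  have "q \<le> (\<Sum>u\<in>N. pmf (\<sigma> h) u * w u)" if "h \<noteq> []" "last h = t" for h
  proof -
    define d where "d = upd_ext upd (butlast h) m0"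
    have d: "set_pmf d \<subseteq> Mem"
      unfolding d_def using upd \<open>m0 \<in> Mem\<close> by (rule set_pmf_upd_ext)
    have \<sigma>h: "\<sigma> h = bind_pmf d (\<lambda>m. sel m t)"
      using assms(3,4) that unfolding induces_def d_def by auto
    have pmf_\<sigma>h: "pmf (\<sigma> h) u = (\<Sum>m\<in>Mem. pmf (sel m t) u * pmf d m)" for u
      unfolding \<sigma>h pmf_bind using d \<open>finite Mem\<close> by (intro integral_measure_pmf_real) auto
    have "(\<Sum>u\<in>N. pmf (\<sigma> h) u * w u) = (\<Sum>m\<in>Mem. pmf d m * (\<Sum>u\<in>N. pmf (sel m t) u * w u))"
      unfolding pmf_\<sigma>h sum_distrib_left sum_distrib_right by (subst sum.swap) (simp add: mult_ac)
    also have "\<dots> \<ge> (\<Sum>m\<in>Mem. pmf d m * q)"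
    proof (intro sum_mono mult_left_mono)
      fix m assume "m \<in> Mem"
      then have "q \<le> v m"
        using \<open>finite Mem\<close> by (simp add: q_def min.coboundedI2)
      also have "v m \<le> (\<Sum>u\<in>N. pmf (sel m t) u * w u)"
        unfolding v_def using \<open>m \<in> Mem\<close> N w_pos by (intro member_le_sum) (auto simp: N_def less_imp_le)
      finally show "q \<le> (\<Sum>u\<in>N. pmf (sel m t) u * w u)" .
    qed simp
    also have "(\<Sum>m\<in>Mem. pmf d m * q) = q"
      using sum_pmf_eq_1[OF \<open>finite Mem\<close> d] by (simp flip: sum_distrib_right)
    finally show ?thesis .
  qed
  moreover have "0 < Min (v ` Mem)"
    using \<open>finite Mem\<close> \<open>m0 \<in> Mem\<close> v_pos by (subst Min_gr_iff) auto
  ultimately show ?thesis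
    using that[of q N] N by (simp add: q_def)
qed

section \<open>The gadget\<close>

definition half_geometric :: "nat pmf" where
  "half_geometric = geometric_pmf (1/2)"

text \<open>From the player state \<open>0\<close> the controller moves to a random state \<open>n + 3\<close> of its choice,
  which moves to the colour-1 state \<open>2\<close> with probability \<open>2^-n\<close> and to \<open>1\<close> otherwise;
  both \<open>1\<close> and \<open>2\<close> return to \<open>0\<close>.\<close>

definition gadget_succ :: "nat \<Rightarrow> nat set" where
  "gadget_succ t = (if t = 0 then {n. 3 \<le> n} else if t \<le> 2 then {0} else {1, 2})"

definition gadget_prob :: "nat \<Rightarrow> nat pmf" where
  "gadget_prob t = (if t \<le> 2 then return_pmf 0
     else map_pmf (\<lambda>x. if t - 3 \<le> x then 2 else 1) half_geometric)"

definition gadget :: mdp where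
  "gadget = \<lparr>player = {0}, succ = gadget_succ, prob_of = gadget_prob\<rparr>"

definition gadget_col :: "nat \<Rightarrow> nat" where
  "gadget_col t = (if t = 2 then 1 else 0)"

lemma gadget_simps [simp]:
  "player gadget = {0}" "succ gadget = gadget_succ" "prob_of gadget = gadget_prob"
  by (simp_all add: gadget_def)

lemma prob_half_geometric_ge: "measure_pmf.prob half_geometric {x. n \<le> x} = (1/2) ^ n"
proof -
  have "measure_pmf.prob half_geometric {..<n} = 1 - (1/2) ^ n"
    by (induction n) (auto simp: half_geometric_def measure_measure_pmf_finite pmf_geometric)
  moreover have "{x. n \<le> x} = UNIV - {..<n}"
    by auto
  ultimately show ?thesis
    using measure_pmf.prob_compl[of "{..<n}" half_geometric] by simp
qed

lemma pmf_gadget_prob_2: "pmf (gadget_prob (n + 3)) 2 = (1/2) ^ n"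
proof -
  have "(\<lambda>x. if n \<le> x then 2 else 1 :: nat) -` {2} = {x. n \<le> x}"
    by (auto split: if_splits)
  then show ?thesis
    by (simp add: gadget_prob_def pmf_map prob_half_geometric_ge)
qed

lemma wf_mdp_gadget: "wf_mdp gadget"
  by (auto simp: wf_mdp_def gadget_succ_def gadget_prob_def)

lemma infinitely_branching_gadget: "infinitely_branching gadget"
proof -
  have "infinite {n::nat. 3 \<le> n}"
    using infinite_Ici[of 3] by (simp add: atLeast_def)
  then show ?thesis
    unfolding infinitely_branching_def by (auto simp: gadget_succ_def intro: exI[of _ 0])
qed

lemma Parity_gadget:
  "Parity gadget gadget_col = {\<omega>. is_play gadget \<omega> \<and> (\<forall>\<^sub>\<infinity>i. \<omega> !! i \<noteq> 2)}"
  by (subst Parity_co_Buchi) (auto simp: gadget_col_def)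

lemma gadget_path_round_start:
  assumes "hd h = 0" "\<forall>i. Suc i < length h \<longrightarrow> h ! Suc i \<in> gadget_succ (h ! i)"
  shows "3 * k < length h \<Longrightarrow> h ! (3 * k) = 0"
proof (induction k)
  case 0
  then show ?case
    using assms(1) by (simp add: hd_conv_nth)
next
  case (Suc k)
  then have "h ! (3 * k) = 0" "3 * k + 3 < length h"
    by simp_all
  moreover have "h ! Suc (3 * k) \<in> gadget_succ (h ! (3 * k))"
    "h ! Suc (Suc (3 * k)) \<in> gadget_succ (h ! Suc (3 * k))"
    "h ! Suc (Suc (Suc (3 * k))) \<in> gadget_succ (h ! Suc (Suc (3 * k)))"
    using assms(2) \<open>3 * k + 3 < length h\<close> by simp_all
  ultimately have "h ! Suc (Suc (Suc (3 * k))) = 0"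
    by (auto simp: gadget_succ_def split: if_splits)
  then show ?case
    by (simp add: eval_nat_numeral)
qed

section \<open>Finite-memory strategies lose\<close>

lemma gadget_round_start_last:
  assumes "is_strategy gadget \<sigma>" "cyl_prob gadget 0 \<sigma> h \<noteq> 0" "length h = 3 * k + 1"
  shows "last h = 0"
proof -
  have "h \<noteq> []"
    using assms(3) by auto
  with cyl_prob_nonzero_path[OF wf_mdp_gadget assms(1,2)] have "h ! (3 * k) = 0"
    using assms(3) by (intro gadget_path_round_start) auto
  with \<open>h \<noteq> []\<close> assms(3) show ?thesis
    by (simp add: last_conv_nth)
qed

lemma FR_strategy_gadget_bound:
  assumes "FR_strategy gadget \<sigma>"
  obtains q U where "0 < q" "q \<le> 1" "finite U" "U \<subseteq> gadget_succ 0"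
    "\<And>h. h \<noteq> [] \<Longrightarrow> last h = 0 \<Longrightarrow> q \<le> (\<Sum>u\<in>U. pmf (\<sigma> h) u * pmf (gadget_prob u) 2)"
proof -
  obtain Mem m0 upd sel where "finite Mem" "wf_transducer gadget Mem m0 upd sel" "induces gadget m0 upd sel \<sigma>"
    using assms unfolding FR_strategy_def by blast
  moreover have "0 \<in> player gadget"
    by simp
  moreover have "\<forall>u\<in>succ gadget 0. 0 < pmf (gadget_prob u) 2"
  proof
    fix u assume "u \<in> succ gadget 0"
    then have "u = (u - 3) + 3"
      by (simp add: gadget_succ_def)
    moreover have "0 < pmf (gadget_prob ((u - 3) + 3)) 2"
      by (simp only: pmf_gadget_prob_2) simp
    ultimately show "0 < pmf (gadget_prob u) 2"
      by simp
  qed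
  ultimately obtain q U where "0 < q" "q \<le> 1" "finite U" "U \<subseteq> succ gadget 0"
    "\<And>h. h \<noteq> [] \<Longrightarrow> last h = 0 \<Longrightarrow> q \<le> (\<Sum>u\<in>U. pmf (\<sigma> h) u * pmf (gadget_prob u) 2)"
    by (rule finite_memory_weight_lower_bound) blast
  then show ?thesis
    using that by simp
qed

context
  fixes \<sigma> \<mu> q U
  assumes strategy: "is_strategy gadget \<sigma>" and play_measure: "is_play_measure gadget 0 \<sigma> \<mu>"
    and q: "0 < q" "q \<le> 1" and U: "finite U" "U \<subseteq> gadget_succ 0"
    and bound: "\<And>h. h \<noteq> [] \<Longrightarrow> last h = 0 \<Longrightarrow> q \<le> (\<Sum>u\<in>U. pmf (\<sigma> h) u * pmf (gadget_prob u) 2)"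
begin

interpretation prob_space \<mu>
  using play_measure by (simp add: is_play_measure_def)

lemma sets_play_measure: "sets \<mu> = sets (stream_space (count_space UNIV))"
  using play_measure by (simp add: is_play_measure_def)

lemma gadget_round_misses_2:
  assumes "length h = 3 * k + 1"
  shows "measure \<mu> ({\<omega>. stake (3 * k + 1) \<omega> = h} \<inter> {\<omega>. \<omega> !! (3 * k + 2) \<noteq> 2})
    \<le> (1 - q) * measure \<mu> {\<omega>. stake (3 * k + 1) \<omega> = h}"
proof -
  define C where "C = {\<omega>. stake (3 * k + 1) \<omega> = h}"
  define B where "B = {\<omega>. stake (3 * k + 1) \<omega> = h \<and> \<omega> !! (3 * k + 2) = 2}"
  have C_sets: "C \<in> sets \<mu>"
    unfolding C_def using stake_sets[OF sets_play_measure, of _ "{h}"] by (simp del: stake.simps)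
  have "B = {\<omega>. stake (3 * k + 1) \<omega> \<in> {h}} \<inter> {\<omega>. \<omega> !! (3 * k + 2) \<in> {2}}"
    by (auto simp: B_def)
  then have B_sets: "B \<in> sets \<mu>"
    using stake_sets[OF sets_play_measure] snth_sets[OF sets_play_measure] by (simp only: sets.Int)
  have C_measure: "measure \<mu> C = cyl_prob gadget 0 \<sigma> h"
    using play_measure assms unfolding is_play_measure_def C_def by metis
  have "C \<inter> {\<omega>. \<omega> !! (3 * k + 2) \<noteq> 2} = C - B"
    by (auto simp: C_def B_def)
  moreover have "measure \<mu> (C - B) \<le> (1 - q) * measure \<mu> C"
  proof (cases "cyl_prob gadget 0 \<sigma> h = 0")
    case True
    then show ?thesis
      using C_sets C_measure finite_measure_mono[of "C - B" C] by simp
  next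
    case False
    have "h \<noteq> []"
      using assms by auto
    have "last h = 0"
      using gadget_round_start_last[OF strategy False assms] .
    have "U \<inter> player gadget = {}"
      using U by (auto simp: gadget_succ_def)
    then have "cyl_prob gadget 0 \<sigma> h * (\<Sum>u\<in>U. pmf (\<sigma> h) u * pmf (gadget_prob u) 2) \<le> measure \<mu> B"
      using play_measure_two_steps_ge[OF play_measure U(1) _ \<open>h \<noteq> []\<close>, of 2] \<open>last h = 0\<close> assms
      by (simp add: B_def)
    moreover have "cyl_prob gadget 0 \<sigma> h * q \<le> cyl_prob gadget 0 \<sigma> h * (\<Sum>u\<in>U. pmf (\<sigma> h) u * pmf (gadget_prob u) 2)"
      using bound[OF \<open>h \<noteq> []\<close> \<open>last h = 0\<close>] C_measure measure_nonneg[of \<mu> C]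
      by (intro mult_left_mono) auto
    moreover have "measure \<mu> (C - B) = measure \<mu> C - measure \<mu> B"
      using C_sets B_sets by (intro finite_measure_Diff) (auto simp: B_def C_def)
    ultimately show ?thesis
      using C_measure by (simp add: algebra_simps)
  qed
  ultimately show ?thesis
    by (simp add: C_def)
qed

lemma gadget_rounds_miss_2:
  "measure \<mu> {\<omega>. \<forall>j<K. \<omega> !! (3 * (n + j) + 2) \<noteq> 2} \<le> (1 - q) ^ K"
proof (induction K)
  case (Suc K)
  define T where "T = {xs :: nat list. \<forall>j<K. xs ! (3 * (n + j) + 2) \<noteq> 2}"
  have stake_T: "{\<omega>. stake (3 * (n + K) + 1) \<omega> \<in> T} = {\<omega>. \<forall>j<K. \<omega> !! (3 * (n + j) + 2) \<noteq> 2}"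
    by (auto simp: T_def)
  have "{\<omega>. \<forall>j<Suc K. \<omega> !! (3 * (n + j) + 2) \<noteq> 2}
      = {\<omega>. \<forall>j<K. \<omega> !! (3 * (n + j) + 2) \<noteq> 2} \<inter> {\<omega>. \<omega> !! (3 * (n + K) + 2) \<noteq> 2}"
    by (auto simp: less_Suc_eq)
  also have "\<dots> = {\<omega>. stake (3 * (n + K) + 1) \<omega> \<in> T} \<inter> {\<omega>. \<omega> !! (3 * (n + K) + 2) \<noteq> 2}"
    by (simp only: stake_T)
  also have "measure \<mu> \<dots> \<le> (1 - q) * measure \<mu> {\<omega>. stake (3 * (n + K) + 1) \<omega> \<in> T}"
  proof (rule measure_stake_Int_le[OF finite_measure_axioms sets_play_measure])
    show "{\<omega>. \<omega> !! (3 * (n + K) + 2) \<noteq> 2} \<in> sets \<mu>"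
      using snth_sets[OF sets_play_measure, of _ "- {2}"] by (simp del: snth.simps)
    show "0 \<le> 1 - q"
      using q by simp
  qed (rule gadget_round_misses_2)
  also have "\<dots> \<le> (1 - q) * (1 - q) ^ K"
    using Suc.IH q unfolding stake_T by (intro mult_left_mono) auto
  finally show ?case
    by simp
qed simp

lemma gadget_eventually_miss_2_null: "{\<omega>. \<forall>\<^sub>\<infinity>i. \<omega> !! i \<noteq> 2} \<in> null_sets \<mu>"
proof -
  define B where "B n = {\<omega> :: nat stream. \<forall>i\<ge>n. \<omega> !! i \<noteq> 2}" for n
  have B_sets: "B n \<in> sets \<mu>" for n
  proof -
    have "B n = (\<Inter>i\<in>{n..}. {\<omega>. \<omega> !! i \<in> - {2}})"
      by (auto simp: B_def)
    also have "\<dots> \<in> sets \<mu>"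
      using snth_sets[OF sets_play_measure, of _ "- {2}"] by (intro sets.countable_INT) auto
    finally show ?thesis .
  qed
  have "measure \<mu> (B n) \<le> (1 - q) ^ K" for n K
  proof -
    have "B n \<subseteq> {\<omega>. \<forall>j<K. \<omega> !! (3 * (n + j) + 2) \<noteq> 2}"
      by (auto simp: B_def simp del: snth.simps)
    moreover have "{\<omega>. \<forall>j<K. \<omega> !! (3 * (n + j) + 2) \<noteq> 2} \<in> sets \<mu>"
      using stake_sets[OF sets_play_measure, of "3 * (n + K)" "{xs. \<forall>j<K. xs ! (3 * (n + j) + 2) \<noteq> 2}"]
      by simp
    ultimately show ?thesis
      by (rule order_trans[OF finite_measure_mono gadget_rounds_miss_2])
  qed
  moreover have "(\<lambda>K. (1 - q) ^ K) \<longlonglongrightarrow> 0"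
    using q by (intro LIMSEQ_power_zero) auto
  ultimately have B_le_0: "measure \<mu> (B n) \<le> 0" for n
    by (intro LIMSEQ_le_const) auto
  have "measure \<mu> (B n) = 0" for n
    using B_le_0[of n] measure_nonneg[of \<mu> "B n"] by linarith
  then have "(\<Union>n. B n) \<in> null_sets \<mu>"
    using B_sets by (intro null_sets_UN null_setsI) (auto simp: emeasure_eq_measure)
  moreover have "{\<omega>. \<forall>\<^sub>\<infinity>i. \<omega> !! i \<noteq> 2} = (\<Union>n. B n)"
    by (auto simp: B_def MOST_nat_le)
  ultimately show ?thesis
    by simp
qed

end

lemma gadget_FR_strategy_loses:
  assumes "FR_strategy gadget \<sigma>" "is_play_measure gadget 0 \<sigma> \<mu>"
  shows "measure \<mu> (Parity gadget gadget_col) = 0"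
proof -
  obtain q U where "0 < q" "q \<le> 1" "finite U" "U \<subseteq> gadget_succ 0"
    "\<And>h. h \<noteq> [] \<Longrightarrow> last h = 0 \<Longrightarrow> q \<le> (\<Sum>u\<in>U. pmf (\<sigma> h) u * pmf (gadget_prob u) 2)"
    using FR_strategy_gadget_bound[OF assms(1)] by blast
  then have null: "{\<omega>. \<forall>\<^sub>\<infinity>i. \<omega> !! i \<noteq> 2} \<in> null_sets \<mu>"
    using assms by (intro gadget_eventually_miss_2_null) (auto simp: FR_strategy_def)
  have "Parity gadget gadget_col \<subseteq> {\<omega>. \<forall>\<^sub>\<infinity>i. \<omega> !! i \<noteq> 2}"
    by (auto simp: Parity_gadget)
  then show ?thesis
  proof (cases "Parity gadget gadget_col \<in> sets \<mu>")
    case True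
    then show ?thesis
      using null_sets_subset[OF null] \<open>Parity gadget gadget_col \<subseteq> _\<close> by (intro measure_eq_0_null_sets) blast
  qed (rule measure_notin_sets)
qed

section \<open>An infinite-memory strategy wins\<close>

lemma prob_stream_space_stake_snth:
  fixes D :: "'a::countable pmf"
  shows "measure (stream_space D) {X. P (stake j X) \<and> X !! j \<in> A}
    = measure (stream_space D) {X. P (stake j X)} * measure_pmf.prob D A"
proof (induction j arbitrary: P)
  case 0
  interpret S: prob_space "stream_space D"
    by (rule prob_space.prob_space_stream_space[OF measure_pmf.prob_space_axioms])
  have A_sets: "{X \<in> space (stream_space D). X !! 0 \<in> A} \<in> sets (stream_space D)"
    by measurable
  have "ennreal (measure (stream_space D) {X. X !! 0 \<in> A})
      = (\<integral>\<^sup>+t. ennreal (measure (stream_space D) {X. t \<in> A}) \<partial>D)"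
    using prob_space.prob_stream_space[OF measure_pmf.prob_space_axioms A_sets]
    by (simp add: space_stream_space)
  also have "\<dots> = (\<integral>\<^sup>+t. indicator A t \<partial>D)"
    using S.prob_space by (intro nn_integral_cong) (simp add: space_stream_space split: split_indicator)
  finally show ?case
    using S.prob_space by (simp add: measure_pmf.emeasure_eq_measure space_stream_space)
next
  case (Suc j)
  let ?S = "stream_space D"
  have "{X \<in> space ?S. P (stake (Suc j) X) \<and> X !! Suc j \<in> A} \<in> sets ?S"
       "{X \<in> space ?S. P (stake (Suc j) X)} \<in> sets ?S"
    by measurable
  note prob_Stream = this[THEN prob_space.prob_stream_space[OF measure_pmf.prob_space_axioms]]
  have "ennreal (measure ?S {X. P (stake (Suc j) X) \<and> X !! Suc j \<in> A})
      = (\<integral>\<^sup>+t. ennreal (measure ?S {X. P (t # stake j X)}) * ennreal (measure_pmf.prob D A) \<partial>D)"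
    using prob_Stream(1) Suc.IH[of "\<lambda>xs. P (_ # xs)"] by (simp add: space_stream_space ennreal_mult)
  also have "\<dots> = ennreal (measure ?S {X. P (stake (Suc j) X)}) * ennreal (measure_pmf.prob D A)"
    using prob_Stream(2) by (simp add: nn_integral_multc space_stream_space)
  finally show ?case
    by (simp add: ennreal_mult[symmetric])
qed

text \<open>Its plays are realised by
  \<open>sampled_play\<close> from a stream of independent geometric samples, the \<open>k\<close>-th of which decides
  whether round \<open>k\<close> visits the state \<open>2\<close>.\<close>

definition increasing_strategy :: "nat list \<Rightarrow> nat pmf" where
  "increasing_strategy h = return_pmf (length h div 3 + 3)"

definition sampled_state :: "nat \<Rightarrow> nat \<Rightarrow> nat" where
  "sampled_state i x = (if i mod 3 = 0 then 0 else if i mod 3 = 1 then i div 3 + 3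
     else if i div 3 \<le> x then 2 else 1)"

definition sampled_play :: "nat stream \<Rightarrow> nat stream" where
  "sampled_play X = to_stream (\<lambda>i. sampled_state i (X !! (i div 3)))"

lemma sampled_play_nth [simp]: "sampled_play X !! i = sampled_state i (X !! (i div 3))"
  by (simp add: sampled_play_def to_stream_def)

lemma upd_ext_counter: "upd_ext (\<lambda>m t. return_pmf (Suc m)) w m = return_pmf (m + length w)"
proof -
  have "foldl (\<lambda>d t. bind_pmf d (\<lambda>m. return_pmf (Suc m))) (return_pmf m) w = return_pmf (m + length w)"
    for m
    by (induction w arbitrary: m) (auto simp: bind_return_pmf)
  then show ?thesis
    by (simp add: upd_ext_def)
qed

lemma HD_strategy_increasing: "HD_strategy gadget increasing_strategy"
proof -
  have "wf_transducer gadget UNIV 0 (\<lambda>m t. return_pmf (Suc m)) (\<lambda>m t. return_pmf (Suc m div 3 + 3))"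
    by (auto simp: wf_transducer_def gadget_succ_def)
  moreover have "induces gadget 0 (\<lambda>m t. return_pmf (Suc m)) (\<lambda>m t. return_pmf (Suc m div 3 + 3))
      increasing_strategy"
    unfolding induces_def
    by (auto simp: upd_ext_counter increasing_strategy_def bind_return_pmf Suc_diff_1)
  moreover have "is_strategy gadget increasing_strategy"
    by (auto simp: is_strategy_def increasing_strategy_def gadget_succ_def)
  ultimately show ?thesis
    unfolding HD_strategy_def by blast
qed

lemma mod_3_cases:
  fixes m :: nat
  obtains "m mod 3 = 0" | "m mod 3 = 1" | "m mod 3 = 2"
  using mod_less_divisor[of 3 m] by linarith

lemma sampled_state_succ: "sampled_state (Suc i) y \<in> gadget_succ (sampled_state i x)"
  by (cases i rule: mod_3_cases) (auto simp: sampled_state_def gadget_succ_def mod_Suc)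

lemma is_play_sampled_play: "is_play gadget (sampled_play X)"
  unfolding is_play_def sampled_play_nth gadget_simps by (intro allI sampled_state_succ)

lemma stake_sampled_play_prefix:
  assumes "L \<le> 3 * j + 2"
  shows "stake L (sampled_play X) = stake L (sampled_play (stake j X @- Y))"
proof (rule nth_equalityI)
  fix i assume "i < length (stake L (sampled_play X))"
  then have "i < L"
    by simp
  moreover have "i div 3 < j" if "i mod 3 = 2"
    using \<open>i < L\<close> assms that div_mult_mod_eq[of i 3] by linarith
  ultimately show "stake L (sampled_play X) ! i = stake L (sampled_play (stake j X @- Y)) ! i"
    by (auto simp: sampled_state_def)
qed simp

abbreviation samples :: "nat stream measure" where
  "samples \<equiv> stream_space (measure_pmf half_geometric)"

lemma prob_samples_stake_sampled_play_Suc: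
  assumes "length h = L"
  shows "measure samples {X. stake (Suc L) (sampled_play X) = h @ [a]}
    = measure samples {X. stake L (sampled_play X) = h} * measure_pmf.prob half_geometric {x. sampled_state L x = a}"
proof -
  define j where "j = L div 3"
  have "L \<le> 3 * j + 2"
    by (simp add: j_def)
  then have "{X. stake (Suc L) (sampled_play X) = h @ [a]}
      = {X. (\<lambda>xs. stake L (sampled_play (xs @- sconst 0)) = h) (stake j X) \<and> X !! j \<in> {x. sampled_state L x = a}}"
    using assms stake_sampled_play_prefix[of L j] by (auto simp: j_def stake_Suc simp del: stake.simps)
  moreover have "{X. stake L (sampled_play X) = h}
      = {X. (\<lambda>xs. stake L (sampled_play (xs @- sconst 0)) = h) (stake j X)}"
    using \<open>L \<le> 3 * j + 2\<close> stake_sampled_play_prefix[of L j] by auto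
  ultimately show ?thesis
    using prob_stream_space_stake_snth[of half_geometric "\<lambda>xs. stake L (sampled_play (xs @- sconst 0)) = h" j
      "{x. sampled_state L x = a}"]
    by (simp del: stake.simps)
qed

lemma step_prob_increasing_strategy:
  assumes "0 < L"
  shows "step_prob gadget increasing_strategy (stake L (sampled_play X)) a
    = measure_pmf.prob half_geometric {x. sampled_state L x = a}"
proof -
  obtain m where "L = Suc m"
    using assms by (cases L) auto
  then have last: "last (stake L (sampled_play X)) = sampled_state m (X !! (m div 3))"
    by (simp add: last_conv_nth del: stake.simps)
  have step: "step_prob gadget increasing_strategy (stake L (sampled_play X)) a
      = (if sampled_state m (X !! (m div 3)) = 0 then pmf (return_pmf (L div 3 + 3)) a
         else pmf (gadget_prob (sampled_state m (X !! (m div 3)))) a)"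
    by (simp add: step_prob_def last increasing_strategy_def del: stake.simps)
  show ?thesis
  proof (cases m rule: mod_3_cases)
    case 1
    then show ?thesis
      using \<open>L = Suc m\<close> unfolding step
      by (auto simp: sampled_state_def mod_Suc div_Suc split: split_indicator)
  next
    case 2
    have "(\<lambda>x. if m div 3 \<le> x then 2 else 1 :: nat) -` {a} = {x. sampled_state L x = a}"
      using 2 \<open>L = Suc m\<close> by (auto simp: sampled_state_def mod_Suc div_Suc)
    with 2 show ?thesis
      unfolding step by (simp add: gadget_prob_def sampled_state_def pmf_map)
  next
    case 3
    then show ?thesis
      using \<open>L = Suc m\<close> unfolding step
      by (auto simp: gadget_prob_def sampled_state_def mod_Suc split: split_indicator)
  qed
qed

lemma sets_samples: "sets samples = sets (stream_space (count_space UNIV))"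
  by (rule sets_stream_space_cong) simp

lemma prob_space_samples: "prob_space samples"
  by (rule prob_space.prob_space_stream_space[OF measure_pmf.prob_space_axioms])

lemma prob_samples_cylinder:
  "measure samples {X. stake (length h) (sampled_play X) = h} = cyl_prob gadget 0 increasing_strategy h"
proof (induction h rule: rev_induct)
  case Nil
  then show ?case
    using prob_space.prob_space[OF prob_space_samples] by (simp add: space_stream_space)
next
  case (snoc a h)
  show ?case
  proof (cases "h = []")
    case True
    have "shd (sampled_play X) = 0" for X
      using sampled_play_nth[of X 0] by (simp add: sampled_state_def)
    with True show ?thesis
      using prob_space.prob_space[OF prob_space_samples]
      by (simp add: cyl_prob_singleton space_stream_space)
  next
    case False
    let ?L = "length h"
    have "measure samples {X. stake (Suc ?L) (sampled_play X) = h @ [a]}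
        = cyl_prob gadget 0 increasing_strategy h * measure_pmf.prob half_geometric {x. sampled_state ?L x = a}"
      using snoc.IH by (simp add: prob_samples_stake_sampled_play_Suc del: stake.simps)
    also have "\<dots> = cyl_prob gadget 0 increasing_strategy h * step_prob gadget increasing_strategy h a"
    proof (cases "\<exists>X. stake ?L (sampled_play X) = h")
      case True
      then obtain X where "stake ?L (sampled_play X) = h"
        by blast
      with False show ?thesis
        using step_prob_increasing_strategy[of ?L X a] by simp
    next
      case False
      \<comment> \<open>then \<open>h\<close> has probability \<open>0\<close> by the induction hypothesis\<close>
      then show ?thesis
        using snoc.IH by simp
    qed
    finally show ?thesis
      using False by (simp add: cyl_prob_snoc del: stake.simps)
  qed
qed

lemma measurable_sampled_play:
  "sampled_play \<in> measurable samples (stream_space (count_space UNIV))"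
proof (rule measurable_stream_space2)
  fix n
  have "(\<lambda>X. X !! (n div 3)) \<in> measurable samples (count_space UNIV)"
    using measurable_snth[of "n div 3" "measure_pmf half_geometric"] by simp
  then show "(\<lambda>X. sampled_play X !! n) \<in> measurable samples (count_space UNIV)"
    by simp
qed

lemma is_play_measure_sampled_play:
  "is_play_measure gadget 0 increasing_strategy (distr samples (stream_space (count_space UNIV)) sampled_play)"
  unfolding is_play_measure_def
proof (intro conjI allI)
  show "prob_space (distr samples (stream_space (count_space UNIV)) sampled_play)"
    by (rule prob_space.prob_space_distr[OF prob_space_samples measurable_sampled_play])
  fix h :: "nat list"
  have "{\<omega>. stake (length h) \<omega> = h} \<in> sets (stream_space (count_space UNIV))"
    using stake_sets[of "stream_space (count_space UNIV)" _ "{h}"] by simp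
  then show "measure (distr samples (stream_space (count_space UNIV)) sampled_play) {\<omega>. stake (length h) \<omega> = h}
      = cyl_prob gadget 0 increasing_strategy h"
    by (simp add: measure_distr[OF measurable_sampled_play] vimage_def space_stream_space
        prob_samples_cylinder del: stake.simps)
qed simp

lemma Parity_gadget_sets: "Parity gadget gadget_col \<in> sets (stream_space (count_space UNIV))"
proof -
  have "Measurable.pred (stream_space (count_space UNIV))
      (\<lambda>\<omega>::nat stream. (\<forall>i. \<omega> !! Suc i \<in> gadget_succ (\<omega> !! i)) \<and> (\<exists>m. \<forall>n\<ge>m. \<omega> !! n \<noteq> 2))"
    by measurable
  then show ?thesis
    by (simp add: pred_def space_stream_space Parity_gadget is_play_def MOST_nat_le)
qed

lemma AE_samples_Parity: "AE X in samples. sampled_play X \<in> Parity gadget gadget_col"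
proof -
  interpret prob_space samples
    by (rule prob_space_samples)
  define A where "A k = {X. k \<le> X !! k}" for k
  have A_sets: "A k \<in> sets samples" for k
    unfolding A_def using snth_sets[OF sets_samples, of k "{x. k \<le> x}"] by simp
  have "measure samples (A k) = (1/2) ^ k" for k
    using prob_stream_space_stake_snth[of half_geometric "\<lambda>_. True" k "{x. k \<le> x}"]
      prob_space.prob_space[OF prob_space_samples]
    by (simp add: A_def prob_half_geometric_ge space_stream_space)
  then have "AE X in samples. eventually (\<lambda>k. X \<notin> A k) sequentially"
    using A_sets borel_cantelli_AE1[of A samples]
    by (simp add: emeasure_eq_measure summable_geometric space_stream_space)
  then show ?thesis
  proof (rule AE_mp, intro AE_I2 impI)
    fix X assume "eventually (\<lambda>k. X \<notin> A k) sequentially"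
    then obtain K where K: "\<And>k. K \<le> k \<Longrightarrow> X !! k < k"
      by (auto simp: eventually_sequentially A_def not_le)
    have "sampled_play X !! i \<noteq> 2" if "3 * K \<le> i" for i
    proof -
      have "K \<le> i div 3"
        using that by linarith
      then show ?thesis
        using K[of "i div 3"] by (auto simp: sampled_state_def)
    qed
    then show "sampled_play X \<in> Parity gadget gadget_col"
      by (auto simp: Parity_gadget is_play_sampled_play MOST_nat_le)
  qed
qed

lemma gadget_HD_strategy_wins:
  "measure (distr samples (stream_space (count_space UNIV)) sampled_play) (Parity gadget gadget_col) = 1"
proof -
  interpret prob_space samples
    by (rule prob_space_samples)
  have "{X \<in> space samples. sampled_play X \<in> Parity gadget gadget_col} \<in> sets samples"
    using measurable_sets[OF measurable_sampled_play Parity_gadget_sets]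
    by (simp add: vimage_def space_stream_space)
  then have "prob {X \<in> space samples. sampled_play X \<in> Parity gadget gadget_col} = 1"
    using AE_samples_Parity by (simp only: prob_Collect_eq_1)
  then show ?thesis
    by (simp add: measure_distr[OF measurable_sampled_play Parity_gadget_sets] vimage_def space_stream_space)
qed

theorem theorem6:
  shows "\<exists>M Col s. wf_mdp M \<and> infinitely_branching M \<and> (\<forall>t. Col t \<in> {0, 1}) \<and>
     (\<forall>\<sigma> \<mu>. FR_strategy M \<sigma> \<and> is_play_measure M s \<sigma> \<mu> \<longrightarrow>
        measure \<mu> (Parity M Col) = 0) \<and>
     (\<exists>\<sigma> \<mu>. HD_strategy M \<sigma> \<and> is_play_measure M s \<sigma> \<mu> \<and>
        measure \<mu> (Parity M Col) = 1)"
proof (intro exI conjI)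
  show "wf_mdp gadget"
    by (rule wf_mdp_gadget)
  show "infinitely_branching gadget"
    by (rule infinitely_branching_gadget)
  show "\<forall>t. gadget_col t \<in> {0, 1}"
    by (simp add: gadget_col_def)
  show "\<forall>\<sigma> \<mu>. FR_strategy gadget \<sigma> \<and> is_play_measure gadget 0 \<sigma> \<mu> \<longrightarrow>
      measure \<mu> (Parity gadget gadget_col) = 0"
    using gadget_FR_strategy_loses by blast
  show "HD_strategy gadget increasing_strategy"
    by (rule HD_strategy_increasing)
  show "is_play_measure gadget 0 increasing_strategy
      (distr samples (stream_space (count_space UNIV)) sampled_play)"
    by (rule is_play_measure_sampled_play)
  show "measure (distr samples (stream_space (count_space UNIV)) sampled_play) (Parity gadget gadget_col) = 1"
    by (rule gadget_HD_strategy_wins)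
qed

end
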